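(* Let $\delta>1$, $\gamma>0$, $A_s,A_u>0$, $\rho_s,\rho_u>0$ with $\rho_u<\rho_s$, and write $a=\frac{\delta-1}{\delta}$. For $L>0$ define \[ s^*(L)=\left[\gamma^{-\delta}A_s^{\delta-1}L\right]^{\frac{1}{1+\delta\rho_s}},\quad u^*(L)=\left[\gamma^{-\delta}A_u^{\delta-1}L\right]^{\frac{1}{1+\delta\rho_u}}, \] \[ w_s^*(L)=\gamma\, s^*(L)^{\rho_s},\quad w_u^*(L)=\gamma\, u^*(L)^{\rho_u}, \] and for $x>0$ define $\overline{w}(x)=\dfrac{\left[A_u^{a}+A_s^{a}x^{a}\right]^{\frac{\delta}{\delta-1}}}{1+x}$ and $\pi(x)=\left(\frac{A_s}{A_u}\right)^{a}x^{-1/\delta}$. Then: (i) $s^*,u^*,w_s^*,w_u^*$ are strictly increasing in $L$; (ii) $s^*(L)/u^*(L)$ is strictly decreasing in $L$, and on any open interval $I\subset(0,\infty)$ such that the skill premium satisfies $\pi\big(s^*(L)/u^*(L)\big)>1$ for all $L\in I$, the average wage $L\mapsto\overline{w}\big(s^*(L)/u^*(L)\big)$ is strictly decreasing on $I$.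
   Context: Model of the legal labor market: skilled ($s$) and unskilled ($u$) workers with labor supply $j=(w_j/\gamma)^{1/\rho_j}$; a competitive firm produces legal services with CES technology $L=\left[(A_u u)^{\frac{\delta-1}{\delta}}+(A_s s)^{\frac{\delta-1}{\delta}}\right]^{\frac{\delta}{\delta-1}}$ and pays marginal products $w_j=A_j^{\frac{\delta-1}{\delta}}(L/j)^{1/\delta}$; $L>0$ is treated as an exogenous demand parameter (raised by local bankruptcy filings). $s^*,u^*,w_s^*,w_u^*$ are the equilibrium quantities and wages, $\pi$ is the skill premium $w_s/w_u$ expressed through $x=s/u$, and $\overline{w}$ is the average wage $(uw_u+sw_s)/(u+s)$ expressed through $x=s/u$. *)

theory Defs
  imports Complex_Main
begin

definition s_star :: "real \<Rightarrow> real \<Rightarrow> real \<Rightarrow> real \<Rightarrow> real \<Rightarrow> real" where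
  "s_star \<gamma> \<delta> A_s \<rho>_s L = (\<gamma> powr (-\<delta>) * A_s powr (\<delta> - 1) * L) powr (1 / (1 + \<delta> * \<rho>_s))"

definition u_star :: "real \<Rightarrow> real \<Rightarrow> real \<Rightarrow> real \<Rightarrow> real \<Rightarrow> real" where
  "u_star \<gamma> \<delta> A_u \<rho>_u L = (\<gamma> powr (-\<delta>) * A_u powr (\<delta> - 1) * L) powr (1 / (1 + \<delta> * \<rho>_u))"

definition ws_star :: "real \<Rightarrow> real \<Rightarrow> real \<Rightarrow> real \<Rightarrow> real \<Rightarrow> real" where
  "ws_star \<gamma> \<delta> A_s \<rho>_s L = \<gamma> * (s_star \<gamma> \<delta> A_s \<rho>_s L) powr \<rho>_s"

definition wu_star :: "real \<Rightarrow> real \<Rightarrow> real \<Rightarrow> real \<Rightarrow> real \<Rightarrow> real" where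
  "wu_star \<gamma> \<delta> A_u \<rho>_u L = \<gamma> * (u_star \<gamma> \<delta> A_u \<rho>_u L) powr \<rho>_u"

definition avg_wage :: "real \<Rightarrow> real \<Rightarrow> real \<Rightarrow> real \<Rightarrow> real" where
  "avg_wage \<delta> A_s A_u x =
     (A_u powr ((\<delta> - 1) / \<delta>) + A_s powr ((\<delta> - 1) / \<delta>) * x powr ((\<delta> - 1) / \<delta>))
       powr (\<delta> / (\<delta> - 1)) / (1 + x)"

definition skill_premium :: "real \<Rightarrow> real \<Rightarrow> real \<Rightarrow> real \<Rightarrow> real" where
  "skill_premium \<delta> A_s A_u x = (A_s / A_u) powr ((\<delta> - 1) / \<delta>) * x powr (-1 / \<delta>)"

end

theory Submission imports Defs begin

text \<open>With \<open>a = (\<delta> - 1)/\<delta> \<in> (0,1)\<close>, \<open>P = A_u\<^sup>a\<close> and \<open>Q = A_s\<^sup>a\<close>, the equilibrium quantities are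
  power laws in \<open>L\<close>, so (i) is immediate, and \<open>s\<^sup>*/u\<^sup>*\<close> is a constant times \<open>L\<close> to the negative
  power \<open>1/(1+\<delta>\<rho>_s) - 1/(1+\<delta>\<rho>_u)\<close>. The average wage \<open>w(x) = (P + Q x\<^sup>a)\<^bsup>1/a\<^esup>/(1 + x)\<close> has
  derivative \<open>(P + Q x\<^sup>a)\<^bsup>1/a - 1\<^esup> (Q x\<^bsup>a-1\<^esup> - P)/(1 + x)\<^sup>2\<close>, whose sign is that of \<open>\<pi>(x) - 1\<close>
  because \<open>\<pi>(x) = (Q/P) x\<^bsup>a-1\<^esup>\<close>. Since \<open>\<pi>\<close> is decreasing, \<open>\<pi>(x) > 1\<close> propagates to all smaller
  ratios, so \<open>w\<close> increases up to \<open>x\<close>; composed with the decreasing ratio \<open>s\<^sup>*/u\<^sup>*\<close> this makes the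
  average wage decrease in \<open>L\<close>.\<close>

lemma strict_mono_on_powr:
  fixes f :: "real \<Rightarrow> real"
  assumes "strict_mono_on S f" "\<And>x. x \<in> S \<Longrightarrow> 0 \<le> f x" "0 < \<rho>"
  shows "strict_mono_on S (\<lambda>x. f x powr \<rho>)"
  using assms by (auto simp: strict_mono_on_def intro: powr_less_mono2)

lemma strict_mono_on_mult_left:
  fixes f :: "real \<Rightarrow> real"
  assumes "strict_mono_on S f" "0 < c"
  shows "strict_mono_on S (\<lambda>x. c * f x)"
  using assms by (simp add: strict_mono_on_def)

lemma strict_mono_on_scaled_powr:
  fixes c e :: real
  assumes "0 < c" "0 < e"
  shows "strict_mono_on {0<..} (\<lambda>L. (c * L) powr e)"
  using assms by (intro strict_mono_on_powr) (auto simp: strict_mono_on_def)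

lemma scaled_powr_ratio_strict_decreasing:
  fixes c d e f L1 L2 :: real
  assumes "0 < c" "0 < d" "e < f" "0 < L1" "L1 < L2"
  shows "(c * L2) powr e / (d * L2) powr f < (c * L1) powr e / (d * L1) powr f"
proof -
  have power_law: "(c * L) powr e / (d * L) powr f = c powr e / d powr f * L powr (e - f)"
    if "0 < L" for L
    using assms that by (simp add: powr_mult powr_diff)
  have "L2 powr (e - f) < L1 powr (e - f)"
    using assms by (intro powr_less_mono2_neg) auto
  then show ?thesis
    using assms by (simp add: power_law divide_strict_right_mono)
qed

lemma ces_average_has_real_derivative:
  fixes P Q a x :: real
  assumes "0 < P" "0 \<le> Q" "0 < x" "a \<noteq> 0"
  shows "((\<lambda>x. (P + Q * x powr a) powr (1 / a) / (1 + x)) has_real_derivative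
           (P + Q * x powr a) powr (1 / a - 1) * (Q * x powr (a - 1) - P) / (1 + x)\<^sup>2) (at x)"
proof -
  define N where "N = P + Q * x powr a"
  have N_pos: "0 < N"
    using assms by (simp add: N_def add_pos_nonneg)
  have "((\<lambda>x. P + Q * x powr a) has_real_derivative Q * (a * x powr (a - 1))) (at x)"
    using assms by (auto intro!: derivative_eq_intros)
  from DERIV_fun_powr[OF this N_pos[unfolded N_def], of "1 / a"]
  have "((\<lambda>x. (P + Q * x powr a) powr (1 / a)) has_real_derivative
          N powr (1 / a - 1) * (Q * x powr (a - 1))) (at x)"
    using assms by (simp add: N_def)
  from DERIV_divide[OF this DERIV_add[OF DERIV_const DERIV_ident]]
  have "((\<lambda>x. (P + Q * x powr a) powr (1 / a) / (1 + x)) has_real_derivative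
          (N powr (1 / a - 1) * (Q * x powr (a - 1)) * (1 + x) - N powr (1 / a)) / (1 + x)\<^sup>2) (at x)"
    using assms by (simp add: N_def power2_eq_square)
  moreover have "N powr (1 / a - 1) * (Q * x powr (a - 1)) * (1 + x) - N powr (1 / a)
                 = N powr (1 / a - 1) * (Q * x powr (a - 1) - P)"
  proof -
    have "N powr (1 / a) = N powr (1 / a - 1) * N"
      using N_pos by (simp add: powr_diff)
    moreover have "x powr (a - 1) * x = x powr a"
      using assms by (simp add: powr_diff)
    ultimately show ?thesis
      by (simp add: N_def algebra_simps)
  qed
  ultimately show ?thesis
    by (simp add: N_def)
qed

lemma ces_average_strict_increasing:
  fixes P Q a y z :: real
  assumes "0 < P" "0 < Q" "0 < a" "a < 1" "0 < y" "y < z" "P < Q * z powr (a - 1)"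
  shows "(P + Q * y powr a) powr (1 / a) / (1 + y) < (P + Q * z powr a) powr (1 / a) / (1 + z)"
proof (rule DERIV_pos_imp_increasing[OF \<open>y < z\<close>])
  fix x assume "y \<le> x" "x \<le> z"
  then have "0 < x"
    using assms by simp
  have "Q * z powr (a - 1) \<le> Q * x powr (a - 1)"
    using \<open>0 < x\<close> \<open>x \<le> z\<close> assms by (intro mult_left_mono powr_mono2') auto
  then have "P < Q * x powr (a - 1)"
    using assms by linarith
  moreover have "0 < P + Q * x powr a"
    using assms by (simp add: add_pos_nonneg)
  ultimately have "0 < (P + Q * x powr a) powr (1 / a - 1) * (Q * x powr (a - 1) - P) / (1 + x)\<^sup>2"
    using \<open>0 < x\<close> by (intro divide_pos_pos mult_pos_pos) auto
  moreover have "((\<lambda>x. (P + Q * x powr a) powr (1 / a) / (1 + x)) has_real_derivative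
      (P + Q * x powr a) powr (1 / a - 1) * (Q * x powr (a - 1) - P) / (1 + x)\<^sup>2) (at x)"
    using \<open>0 < x\<close> assms by (intro ces_average_has_real_derivative) auto
  ultimately show "\<exists>D. ((\<lambda>x. (P + Q * x powr a) powr (1 / a) / (1 + x)) has_real_derivative D) (at x) \<and> 0 < D"
    by blast
qed

lemma avg_wage_eq_ces_average:
  "avg_wage \<delta> A_s A_u x =
    (A_u powr ((\<delta> - 1) / \<delta>) + A_s powr ((\<delta> - 1) / \<delta>) * x powr ((\<delta> - 1) / \<delta>))
      powr (1 / ((\<delta> - 1) / \<delta>)) / (1 + x)"
  by (simp add: avg_wage_def)

lemma skill_premium_gt_1_iff:
  assumes "1 < \<delta>" "0 < A_s" "0 < A_u"
  shows "1 < skill_premium \<delta> A_s A_u x \<longleftrightarrow>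
    A_u powr ((\<delta> - 1) / \<delta>) < A_s powr ((\<delta> - 1) / \<delta>) * x powr ((\<delta> - 1) / \<delta> - 1)"
proof -
  have "(\<delta> - 1) / \<delta> - 1 = -1 / \<delta>"
    using assms by (simp add: field_simps)
  then show ?thesis
    using assms by (simp add: skill_premium_def powr_divide field_simps)
qed

theorem proposition2:
  fixes \<delta> \<gamma> A_s A_u \<rho>_s \<rho>_u :: real
  assumes "\<delta> > 1" "\<gamma> > 0" "A_s > 0" "A_u > 0" "\<rho>_s > 0" "\<rho>_u > 0" "\<rho>_u < \<rho>_s"
  shows "strict_mono_on {0<..} (s_star \<gamma> \<delta> A_s \<rho>_s)
       \<and> strict_mono_on {0<..} (u_star \<gamma> \<delta> A_u \<rho>_u)
       \<and> strict_mono_on {0<..} (ws_star \<gamma> \<delta> A_s \<rho>_s)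
       \<and> strict_mono_on {0<..} (wu_star \<gamma> \<delta> A_u \<rho>_u)
       \<and> (\<forall>L1 L2. 0 < L1 \<and> L1 < L2 \<longrightarrow>
            s_star \<gamma> \<delta> A_s \<rho>_s L2 / u_star \<gamma> \<delta> A_u \<rho>_u L2
              < s_star \<gamma> \<delta> A_s \<rho>_s L1 / u_star \<gamma> \<delta> A_u \<rho>_u L1)
       \<and> (\<forall>I :: real set. open I \<and> connected I \<and> I \<subseteq> {0<..}
            \<and> (\<forall>L\<in>I. skill_premium \<delta> A_s A_u
                   (s_star \<gamma> \<delta> A_s \<rho>_s L / u_star \<gamma> \<delta> A_u \<rho>_u L) > 1)
            \<longrightarrow> (\<forall>L1\<in>I. \<forall>L2\<in>I. L1 < L2 \<longrightarrow>
                  avg_wage \<delta> A_s A_u (s_star \<gamma> \<delta> A_s \<rho>_s L2 / u_star \<gamma> \<delta> A_u \<rho>_u L2)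
                < avg_wage \<delta> A_s A_u (s_star \<gamma> \<delta> A_s \<rho>_s L1 / u_star \<gamma> \<delta> A_u \<rho>_u L1)))"
proof -
  define a where "a = (\<delta> - 1) / \<delta>"
  have a: "0 < a" "a < 1"
    using assms by (auto simp: a_def)
  have exponents: "1 / (1 + \<delta> * \<rho>_s) < 1 / (1 + \<delta> * \<rho>_u)"
    using assms by (intro frac_less2) (auto simp: add_pos_pos)
  have s_mono: "strict_mono_on {0<..} (s_star \<gamma> \<delta> A_s \<rho>_s)"
    and u_mono: "strict_mono_on {0<..} (u_star \<gamma> \<delta> A_u \<rho>_u)"
    unfolding s_star_def u_star_def using assms
    by (auto intro!: strict_mono_on_scaled_powr add_pos_pos)
  have ws_mono: "strict_mono_on {0<..} (ws_star \<gamma> \<delta> A_s \<rho>_s)"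
    unfolding ws_star_def using assms
    by (intro strict_mono_on_mult_left strict_mono_on_powr s_mono) (auto simp: s_star_def)
  have wu_mono: "strict_mono_on {0<..} (wu_star \<gamma> \<delta> A_u \<rho>_u)"
    unfolding wu_star_def using assms
    by (intro strict_mono_on_mult_left strict_mono_on_powr u_mono) (auto simp: u_star_def)
  have ratio: "s_star \<gamma> \<delta> A_s \<rho>_s L2 / u_star \<gamma> \<delta> A_u \<rho>_u L2
             < s_star \<gamma> \<delta> A_s \<rho>_s L1 / u_star \<gamma> \<delta> A_u \<rho>_u L1" if "0 < L1" "L1 < L2" for L1 L2
    unfolding s_star_def u_star_def
    using assms that exponents by (intro scaled_powr_ratio_strict_decreasing) auto
  have ratio_pos: "0 < s_star \<gamma> \<delta> A_s \<rho>_s L / u_star \<gamma> \<delta> A_u \<rho>_u L" if "0 < L" for L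
    using assms that by (simp add: s_star_def u_star_def)
  have avg_wage_decreasing:
    "avg_wage \<delta> A_s A_u (s_star \<gamma> \<delta> A_s \<rho>_s L2 / u_star \<gamma> \<delta> A_u \<rho>_u L2)
   < avg_wage \<delta> A_s A_u (s_star \<gamma> \<delta> A_s \<rho>_s L1 / u_star \<gamma> \<delta> A_u \<rho>_u L1)"
    if "0 < L1" "L1 < L2"
      "skill_premium \<delta> A_s A_u (s_star \<gamma> \<delta> A_s \<rho>_s L1 / u_star \<gamma> \<delta> A_u \<rho>_u L1) > 1" for L1 L2
    using that assms a ratio_pos[of L2] ratio[OF that(1,2)]
    unfolding avg_wage_eq_ces_average skill_premium_gt_1_iff[OF assms(1,3,4)] a_def[symmetric]
    by (intro ces_average_strict_increasing) auto
  show ?thesis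
    using s_mono u_mono ws_mono wu_mono ratio avg_wage_decreasing by fastforce
qed

end
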